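(* The closure (in the sup norm) of the convex hull of $\{h_A: A\subseteq[0,\pi]\text{ Lebesgue measurable}\}$ coincides with $\mathbf{E}(\mathbb{S}^1)$.
   Context: $\mathbb{S}^1=\mathbb{R}/2\pi$ with its geodesic metric. For a metric space $X$, $\Delta(X)=\{f:X\to\mathbb{R}\text{ bounded}:f(x)+f(x')\ge d_X(x,x')\}$ and the tight span $\mathbf{E}(X)$ is the set of pointwise-minimal elements of $\Delta(X)$ with the sup-norm metric. For $\theta\in\mathbb{R}$, $g_\theta:\mathbb{S}^1\to\mathbb{R}$ is $g_\theta(\varphi)=\frac12$ if $\varphi\in[\theta,\theta+\pi)$ (mod $2\pi$) and $-\frac12$ otherwise. For a Lebesgue measurable $A\subseteq[0,\pi]$, $h_A:\mathbb{S}^1\to\mathbb{R}$ is $h_A(\varphi)=\frac{\pi}{2}+\int_0^\pi g_\theta(\varphi)\big(1_A(\theta)-1_{[0,\pi]\setminus A}(\theta)\big)\,d\theta$. *)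

theory Defs
  imports "HOL-Analysis.Analysis"
begin

text \<open>The circle S^1 = R/2pi.  Points of S^1 are represented by real numbers,
 functions on S^1 by 2pi-periodic functions real => real.\<close>

definition circ_red :: "real \<Rightarrow> real" where
  "circ_red x = x - 2*pi * of_int \<lfloor>x / (2*pi)\<rfloor>"

definition circ_dist :: "real \<Rightarrow> real \<Rightarrow> real" where
  "circ_dist x y = min (circ_red (x - y)) (2*pi - circ_red (x - y))"

definition circ_fun :: "(real \<Rightarrow> real) \<Rightarrow> bool" where
  "circ_fun f \<longleftrightarrow> (\<forall>x. f (x + 2*pi) = f x)"

definition Delta_S1 :: "(real \<Rightarrow> real) set" where
  "Delta_S1 = {f. circ_fun f \<and> bounded (range f) \<and> (\<forall>x y. f x + f y \<ge> circ_dist x y)}"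

definition tight_span_S1 :: "(real \<Rightarrow> real) set" where
  "tight_span_S1 = {f \<in> Delta_S1. \<forall>g \<in> Delta_S1. (\<forall>x. g x \<le> f x) \<longrightarrow> g = f}"

definition g_theta :: "real \<Rightarrow> real \<Rightarrow> real" where
  "g_theta \<theta> \<phi> = (if circ_red (\<phi> - \<theta>) < pi then 1/2 else -1/2)"

definition h_set :: "real set \<Rightarrow> real \<Rightarrow> real" where
  "h_set A \<phi> = pi/2 + (LINT \<theta>:{0..pi}|lebesgue.
       g_theta \<theta> \<phi> * (indicator A \<theta> - indicator ({0..pi} - A) \<theta>))"

definition conv_hull_fun :: "(real \<Rightarrow> real) set \<Rightarrow> (real \<Rightarrow> real) set" where
  "conv_hull_fun S = {(\<lambda>x. \<Sum>i<n. c i * f i x) | (n::nat) c f.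
      (\<forall>i<n. 0 \<le> c i \<and> f i \<in> S) \<and> (\<Sum>i<n. c i) = 1}"

definition sup_closure :: "(real \<Rightarrow> real) set \<Rightarrow> (real \<Rightarrow> real) set" where
  "sup_closure S = {g. \<forall>e>0. \<exists>f\<in>S. \<forall>x. \<bar>f x - g x\<bar> \<le> e}"

end

theory Submission
  imports Defs
begin

text \<open>Minimality
  forces f to coincide with its conjugate x \<mapsto> sup_y (d(x,y) - f y), which makes f
  1-Lipschitz with f x + f (x + pi) = pi; conversely such an f cannot be lowered anywhere, since
  d(x, x + pi) = pi. So E(S^1) is the set of these antipodal nonexpansive functions, which is
  convex, closed under uniform limits, and contains every h_A, because on [0, pi]
  h_A p = pi - p + 2 |A \<inter> [0,p]| - |A|.

  Conversely, for such an f the function u p = (f p + p - f 0) / 2 is nondecreasing and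
  1-Lipschitz on [0, pi]. Placing an interval of length u(p_(k+1)) - u(p_k) at the left end of
  each cell [p_k, p_(k+1)] of a fine grid yields a set A with |A \<inter> [0,p]| uniformly close to u p,
  so h_A is uniformly close to f on [0, pi], hence everywhere by antipodality. In particular the
  h_A themselves, not only their convex combinations, are already dense.\<close>

section \<open>The geodesic distance on the circle\<close>

lemma circ_red_eq_frac: "circ_red x = 2*pi * frac (x / (2*pi))"
  unfolding circ_red_def frac_def by (simp add: algebra_simps)

lemma circ_red_bounds: "0 \<le> circ_red x" "circ_red x < 2*pi"
  unfolding circ_red_eq_frac using frac_lt_1[of "x / (2*pi)"] by auto

lemma circ_red_add_int_mult: "circ_red (x + 2*pi * of_int k) = circ_red x"
proof -
  have "(x + 2*pi * of_int k) / (2*pi) = x / (2*pi) + of_int k" by (simp add: field_simps)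
  then show ?thesis unfolding circ_red_eq_frac by simp
qed

lemma circ_red_id: "0 \<le> x \<Longrightarrow> x < 2*pi \<Longrightarrow> circ_red x = x"
  unfolding circ_red_eq_frac by (simp add: frac_eq)

lemma min_le_abs_add_int_mult:
  assumes "0 \<le> r" "r < 2*pi"
  shows "min r (2*pi - r) \<le> \<bar>r + 2*pi * of_int m\<bar>"
proof (cases "m \<ge> 0")
  case True
  then have "2*pi * of_int m \<ge> 0" by simp
  then show ?thesis using assms by linarith
next
  case False
  then have "2*pi * of_int m \<le> 2*pi * (-1)" by (intro mult_left_mono) auto
  then show ?thesis using assms by linarith
qed

lemma circ_dist_le: "circ_dist x y \<le> \<bar>x - y - 2*pi * of_int k\<bar>"
proof -
  define r where "r = circ_red (x - y)"
  have "r = x - y - 2*pi * of_int \<lfloor>(x - y) / (2*pi)\<rfloor>" unfolding r_def circ_red_def ..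
  then have "x - y - 2*pi * of_int k = r + 2*pi * of_int (\<lfloor>(x - y) / (2*pi)\<rfloor> - k)"
    by (simp add: algebra_simps)
  then show ?thesis
    unfolding circ_dist_def r_def[symmetric]
    using min_le_abs_add_int_mult circ_red_bounds r_def by metis
qed

lemma circ_dist_attained: "\<exists>k::int. circ_dist x y = \<bar>x - y - 2*pi * of_int k\<bar> \<and> circ_dist x y \<le> pi"
proof -
  define n where "n = \<lfloor>(x - y) / (2*pi)\<rfloor>"
  define r where "r = circ_red (x - y)"
  have r: "r = x - y - 2*pi * of_int n" unfolding r_def n_def circ_red_def ..
  have b: "0 \<le> r" "r < 2*pi" unfolding r_def using circ_red_bounds by auto
  show ?thesis
  proof (cases "r \<le> pi")
    case True
    then have "circ_dist x y = \<bar>x - y - 2*pi * of_int n\<bar>" "circ_dist x y \<le> pi"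
      unfolding circ_dist_def r_def[symmetric] using b r by auto
    then show ?thesis by blast
  next
    case False
    then have "circ_dist x y = \<bar>x - y - 2*pi * of_int (n + 1)\<bar>" "circ_dist x y \<le> pi"
      unfolding circ_dist_def r_def[symmetric] using b r by (auto simp: algebra_simps)
    then show ?thesis by blast
  qed
qed

lemma circ_dist_nonneg: "0 \<le> circ_dist x y"
  using circ_dist_attained[of x y] by auto

lemma circ_dist_le_pi: "circ_dist x y \<le> pi"
  using circ_dist_attained[of x y] by auto

lemma circ_dist_refl: "circ_dist x x = 0"
  using circ_dist_le[of x x 0] circ_dist_nonneg[of x x] by simp

lemma circ_dist_le_abs: "circ_dist x y \<le> \<bar>x - y\<bar>"
  using circ_dist_le[of x y 0] by simp

lemma circ_dist_commute: "circ_dist x y = circ_dist y x"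
proof -
  have "circ_dist x y \<le> circ_dist y x" for x y
  proof -
    obtain k where k: "circ_dist y x = \<bar>y - x - 2*pi * of_int k\<bar>"
      using circ_dist_attained by blast
    have "circ_dist x y \<le> \<bar>x - y - 2*pi * of_int (-k)\<bar>" by (rule circ_dist_le)
    also have "\<dots> = circ_dist y x" unfolding k by simp
    finally show ?thesis .
  qed
  then show ?thesis by (meson order_antisym)
qed

lemma circ_dist_triangle: "circ_dist x z \<le> circ_dist x y + circ_dist y z"
proof -
  obtain k where k: "circ_dist x y = \<bar>x - y - 2*pi * of_int k\<bar>" using circ_dist_attained by blast
  obtain l where l: "circ_dist y z = \<bar>y - z - 2*pi * of_int l\<bar>" using circ_dist_attained by blast
  have "circ_dist x z \<le> \<bar>x - z - 2*pi * of_int (k + l)\<bar>" by (rule circ_dist_le)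
  also have "\<dots> = \<bar>(x - y - 2*pi * of_int k) + (y - z - 2*pi * of_int l)\<bar>"
    by (simp add: algebra_simps)
  also have "\<dots> \<le> circ_dist x y + circ_dist y z" unfolding k l by (rule abs_triangle_ineq)
  finally show ?thesis .
qed

lemma circ_dist_add_2pi: "circ_dist (x + 2*pi) y = circ_dist x y"
  unfolding circ_dist_def using circ_red_add_int_mult[of "x - y" 1] by (simp add: algebra_simps)

lemma circ_dist_antipode: "circ_dist x (x + pi) = pi"
proof -
  have "circ_red (x - (x + pi)) = circ_red (pi + 2*pi * of_int (-1))" by simp
  also have "\<dots> = pi" unfolding circ_red_add_int_mult by (simp add: circ_red_id)
  finally show ?thesis unfolding circ_dist_def by simp
qed

lemma circ_dist_add_dist_antipode_le: "circ_dist x y + circ_dist y (x + pi) \<le> pi"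
proof -
  obtain k where k: "circ_dist x y = \<bar>x - y - 2*pi * of_int k\<bar>" "circ_dist x y \<le> pi"
    using circ_dist_attained by blast
  define t where "t = x - y - 2*pi * of_int k"
  have "circ_dist y (x + pi) \<le> \<bar>y - (x + pi) - 2*pi * of_int (-k)\<bar>" by (rule circ_dist_le)
  then have plus: "circ_dist y (x + pi) \<le> \<bar>t + pi\<bar>" unfolding t_def by (simp add: algebra_simps)
  have "circ_dist y (x + pi) \<le> \<bar>y - (x + pi) - 2*pi * of_int (-k - 1)\<bar>" by (rule circ_dist_le)
  then have minus: "circ_dist y (x + pi) \<le> \<bar>t - pi\<bar>" unfolding t_def by (simp add: algebra_simps)
  show ?thesis using k plus minus unfolding t_def[symmetric] by (cases "t \<ge> 0") auto
qed

section \<open>The tight span consists of the antipodal nonexpansive functions\<close>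

definition antipodal_nonexpansive :: "(real \<Rightarrow> real) \<Rightarrow> bool" where
  "antipodal_nonexpansive f \<longleftrightarrow>
     (\<forall>x. f x + f (x + pi) = pi) \<and> (\<forall>x y. \<bar>f x - f y\<bar> \<le> circ_dist x y)"

lemma antipodal_imp_circ_fun:
  assumes "\<And>x. f x + f (x + pi) = pi"
  shows "circ_fun f"
proof -
  have "f (x + 2*pi) = f x" for x
    using assms[of x] assms[of "x + pi"] by (simp add: algebra_simps)
  then show ?thesis unfolding circ_fun_def by blast
qed

lemma antipodal_nonexpansive_in_Delta_S1:
  assumes "antipodal_nonexpansive f"
  shows "f \<in> Delta_S1"
proof -
  have ant: "\<And>x. f x + f (x + pi) = pi" and lip: "\<And>x y. \<bar>f x - f y\<bar> \<le> circ_dist x y"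
    using assms unfolding antipodal_nonexpansive_def by auto
  have "\<bar>f x\<bar> \<le> \<bar>f 0\<bar> + pi" for x
    using lip[of x 0] circ_dist_le_pi[of x 0] by linarith
  then have "bounded (range f)" unfolding bounded_iff by auto
  moreover have "circ_dist x y \<le> f x + f y" for x y
    using lip[of "x + pi" y] ant[of x] circ_dist_add_dist_antipode_le[of x y]
      circ_dist_commute[of y "x + pi"]
    by linarith
  ultimately show ?thesis unfolding Delta_S1_def using antipodal_imp_circ_fun ant by blast
qed

lemma antipodal_nonexpansive_imp_tight_span:
  assumes "antipodal_nonexpansive f"
  shows "f \<in> tight_span_S1"
proof -
  have "g = f" if g: "g \<in> Delta_S1" "\<forall>x. g x \<le> f x" for g
  proof
    fix x
    have "circ_dist x (x + pi) \<le> g x + g (x + pi)" using g(1) unfolding Delta_S1_def by blast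
    then have "pi \<le> g x + g (x + pi)" unfolding circ_dist_antipode .
    moreover have "f x + f (x + pi) = pi" using assms unfolding antipodal_nonexpansive_def by blast
    moreover have "g x \<le> f x" "g (x + pi) \<le> f (x + pi)" using g(2) by blast+
    ultimately show "g x = f x" by linarith
  qed
  then show ?thesis
    unfolding tight_span_S1_def using antipodal_nonexpansive_in_Delta_S1[OF assms] by blast
qed

definition circ_conjugate :: "(real \<Rightarrow> real) \<Rightarrow> real \<Rightarrow> real" where
  "circ_conjugate f x = (SUP y. circ_dist x y - f y)"

lemma circ_conjugate_ge:
  assumes "bounded (range f)"
  shows "circ_dist x y - f y \<le> circ_conjugate f x"
proof -
  obtain B where B: "\<And>y. \<bar>f y\<bar> \<le> B" using assms unfolding bounded_iff by auto
  have bound: "circ_dist x y - f y \<le> pi + B" for y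
    using circ_dist_le_pi[of x y] B[of y] by linarith
  have "bdd_above (range (\<lambda>y. circ_dist x y - f y))" by (rule bdd_aboveI2, rule bound)
  then show ?thesis unfolding circ_conjugate_def by (rule cSUP_upper[rotated]) simp
qed

lemma circ_conjugate_le:
  assumes "\<And>y. circ_dist x y - f y \<le> c"
  shows "circ_conjugate f x \<le> c"
  unfolding circ_conjugate_def using assms by (intro cSUP_least) auto

text \<open>Averaging f with its conjugate stays in Delta, so a minimal f is its own conjugate.\<close>

lemma tight_span_imp_circ_conjugate_eq:
  assumes "f \<in> tight_span_S1"
  shows "circ_conjugate f = f"
proof -
  have D: "f \<in> Delta_S1" and minimal: "\<And>g. g \<in> Delta_S1 \<Longrightarrow> \<forall>x. g x \<le> f x \<Longrightarrow> g = f"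
    using assms unfolding tight_span_S1_def by auto
  have per: "circ_fun f" and bd: "bounded (range f)" and ineq: "\<And>x y. circ_dist x y \<le> f x + f y"
    using D unfolding Delta_S1_def by auto
  let ?fc = "circ_conjugate f"
  define g where "g x = (f x + ?fc x) / 2" for x
  have fc_le: "?fc x \<le> f x" for x
  proof (rule circ_conjugate_le)
    show "circ_dist x y - f y \<le> f x" for y using ineq[of x y] by linarith
  qed
  have fc_ge: "circ_dist x y - f y \<le> ?fc x" for x y
    using circ_conjugate_ge[OF bd] .
  have "circ_fun g"
    using per unfolding g_def circ_fun_def circ_conjugate_def by (simp add: circ_dist_add_2pi)
  moreover have "bounded (range g)"
  proof -
    obtain B where B: "\<And>x. \<bar>f x\<bar> \<le> B" using bd unfolding bounded_iff by auto
    have "\<bar>g x\<bar> \<le> B" for x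
      using fc_le[of x] fc_ge[of x x] B[of x] circ_dist_refl[of x] unfolding g_def by auto
    then show ?thesis unfolding bounded_iff by auto
  qed
  moreover have "circ_dist x y \<le> g x + g y" for x y
  proof -
    have "2 * circ_dist x y \<le> (f x + ?fc x) + (f y + ?fc y)"
      using fc_ge[of x y] fc_ge[of y x] circ_dist_commute[of x y] by linarith
    then show ?thesis unfolding g_def by (simp add: field_simps)
  qed
  ultimately have "g \<in> Delta_S1" unfolding Delta_S1_def by blast
  moreover have "\<forall>x. g x \<le> f x" using fc_le unfolding g_def by (simp add: field_simps)
  ultimately have "g = f" by (rule minimal)
  then have "?fc x = f x" for x using fun_cong[of g f x] unfolding g_def by simp
  then show ?thesis by blast
qed

lemma tight_span_imp_antipodal_nonexpansive:
  assumes "f \<in> tight_span_S1"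
  shows "antipodal_nonexpansive f"
proof -
  have fc: "circ_conjugate f x = f x" for x
    using tight_span_imp_circ_conjugate_eq[OF assms] by simp
  have ineq: "\<And>x y. circ_dist x y \<le> f x + f y"
    using assms unfolding tight_span_S1_def Delta_S1_def by auto
  have one_sided: "f x \<le> f x' + circ_dist x x'" for x x'
  proof -
    have "circ_dist x y - f y \<le> f x' + circ_dist x x'" for y
      using circ_dist_triangle[of x y x'] ineq[of x' y] by linarith
    then show ?thesis using circ_conjugate_le fc by metis
  qed
  then have lip: "\<bar>f x - f y\<bar> \<le> circ_dist x y" for x y
    using one_sided[of x y] one_sided[of y x] circ_dist_commute[of x y] by linarith
  have "f x + f (x + pi) = pi" for x
  proof -
    have "circ_dist x y - f y \<le> pi - f (x + pi)" for y
      using circ_dist_add_dist_antipode_le[of x y] lip[of "x + pi" y]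
        circ_dist_commute[of y "x + pi"]
      by linarith
    then have "f x \<le> pi - f (x + pi)" using circ_conjugate_le fc by metis
    then show ?thesis using ineq[of x "x + pi"] circ_dist_antipode[of x] by linarith
  qed
  then show ?thesis unfolding antipodal_nonexpansive_def using lip by blast
qed

lemma tight_span_S1_eq: "tight_span_S1 = {f. antipodal_nonexpansive f}"
  using antipodal_nonexpansive_imp_tight_span tight_span_imp_antipodal_nonexpansive by blast

lemma antipodal_nonexpansive_convex_comb:
  assumes "\<And>i. i < n \<Longrightarrow> 0 \<le> c i \<and> antipodal_nonexpansive (f i)" "(\<Sum>i<n. c i) = 1"
  shows "antipodal_nonexpansive (\<lambda>x. \<Sum>i<n. c i * f i x)"
  unfolding antipodal_nonexpansive_def
proof (intro conjI allI)
  fix x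
  have "(\<Sum>i<n. c i * f i x) + (\<Sum>i<n. c i * f i (x + pi)) = (\<Sum>i<n. c i * (f i x + f i (x + pi)))"
    by (simp add: sum.distrib algebra_simps)
  also have "\<dots> = (\<Sum>i<n. c i * pi)"
    using assms(1) unfolding antipodal_nonexpansive_def by (intro sum.cong) auto
  also have "\<dots> = pi" using assms(2) by (simp add: sum_distrib_right[symmetric])
  finally show "(\<Sum>i<n. c i * f i x) + (\<Sum>i<n. c i * f i (x + pi)) = pi" .
next
  fix x y
  have "\<bar>(\<Sum>i<n. c i * f i x) - (\<Sum>i<n. c i * f i y)\<bar> = \<bar>\<Sum>i<n. c i * (f i x - f i y)\<bar>"
    by (simp add: sum_subtractf algebra_simps)
  also have "\<dots> \<le> (\<Sum>i<n. \<bar>c i * (f i x - f i y)\<bar>)" by (rule sum_abs)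
  also have "\<dots> \<le> (\<Sum>i<n. c i * circ_dist x y)"
  proof (rule sum_mono)
    fix i assume "i \<in> {..<n}"
    then have "0 \<le> c i" "\<bar>f i x - f i y\<bar> \<le> circ_dist x y"
      using assms(1) unfolding antipodal_nonexpansive_def by auto
    then show "\<bar>c i * (f i x - f i y)\<bar> \<le> c i * circ_dist x y"
      by (simp add: abs_mult mult_left_mono)
  qed
  also have "\<dots> = circ_dist x y" using assms(2) by (simp add: sum_distrib_right[symmetric])
  finally show "\<bar>(\<Sum>i<n. c i * f i x) - (\<Sum>i<n. c i * f i y)\<bar> \<le> circ_dist x y" .
qed

lemma antipodal_nonexpansive_uniform_limit:
  assumes "\<And>e. e > 0 \<Longrightarrow> \<exists>f. antipodal_nonexpansive f \<and> (\<forall>x. \<bar>f x - g x\<bar> \<le> e)"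
  shows "antipodal_nonexpansive g"
proof -
  have approx: "\<exists>f. antipodal_nonexpansive f \<and> \<bar>f x - g x\<bar> \<le> e \<and> \<bar>f y - g y\<bar> \<le> e"
    if "e > 0" for e x y
    using assms[OF that] by blast
  have "\<bar>g x + g (x + pi) - pi\<bar> \<le> 0 + e" if e: "e > 0" for x e
  proof -
    obtain f where f: "antipodal_nonexpansive f" "\<bar>f x - g x\<bar> \<le> e/2"
      "\<bar>f (x + pi) - g (x + pi)\<bar> \<le> e/2"
      using approx[OF half_gt_zero[OF e], of x "x + pi"] by auto
    then have "f x + f (x + pi) = pi" unfolding antipodal_nonexpansive_def by blast
    then show ?thesis using f(2,3) by linarith
  qed
  then have "\<bar>g x + g (x + pi) - pi\<bar> \<le> 0" for x by (rule field_le_epsilon)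
  moreover have "\<bar>g x - g y\<bar> \<le> circ_dist x y + e" if e: "e > 0" for x y e
  proof -
    obtain f where f: "antipodal_nonexpansive f" "\<bar>f x - g x\<bar> \<le> e/2" "\<bar>f y - g y\<bar> \<le> e/2"
      using approx[OF half_gt_zero[OF e], of x y] by auto
    then have "\<bar>f x - f y\<bar> \<le> circ_dist x y" unfolding antipodal_nonexpansive_def by blast
    then show ?thesis using f(2,3) by linarith
  qed
  then have "\<bar>g x - g y\<bar> \<le> circ_dist x y" for x y by (rule field_le_epsilon)
  ultimately show ?thesis unfolding antipodal_nonexpansive_def by auto
qed

section \<open>Antipodal functions are determined on a half-circle\<close>

lemma antipodal_add_int_mult_pi:
  assumes ant: "\<And>x. f x + f (x + pi) = pi"
  shows "f (x + of_int n * pi) = (if even n then f x else pi - f x)"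
proof -
  have up: "f (x + real m * pi) = (if even m then f x else pi - f x)" for m :: nat and x
  proof (induction m)
    case (Suc m)
    have "f (x + real (Suc m) * pi) = pi - f (x + real m * pi)"
      using ant[of "x + real m * pi"] by (simp add: algebra_simps)
    then show ?case using Suc by simp
  qed simp
  have down: "f (x - real m * pi) = (if even m then f x else pi - f x)" for m :: nat and x
  proof (induction m)
    case (Suc m)
    have "f (x - real (Suc m) * pi) = pi - f (x - real m * pi)"
      using ant[of "x - real (Suc m) * pi"] by (simp add: algebra_simps)
    then show ?case using Suc by simp
  qed simp
  show ?thesis
  proof (cases "n \<ge> 0")
    case True
    then obtain m where "n = int m" using nonneg_int_cases by blast
    then show ?thesis using up[of x m] by simp
  next
    case False
    then have "n = - int (nat (- n))" by simp
    then obtain m where "n = - int m" by blast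
    then show ?thesis using down[of x m] by simp
  qed
qed

lemma decompose_mod_pi:
  obtains n :: int and x' where "x = x' + of_int n * pi" "0 \<le> x'" "x' < pi"
proof -
  define n where "n = \<lfloor>x / pi\<rfloor>"
  have "of_int n \<le> x / pi" "x / pi < of_int n + 1" unfolding n_def by linarith+
  then have "of_int n * pi \<le> x" "x < (of_int n + 1) * pi"
    by (simp_all add: pos_le_divide_eq pos_divide_less_eq)
  then show thesis using that[of "x - of_int n * pi" n] by (simp add: algebra_simps)
qed

text \<open>After reduction mod pi, the only nontrivial case is a pair straddling pi; it is
  handled by passing through pi and 0, using f pi = pi - f 0.\<close>

lemma antipodal_abs_diff_le_within_pi:
  assumes ant: "\<And>x. f x + f (x + pi) = pi"
    and lip: "\<And>x y. x \<in> {0..pi} \<Longrightarrow> y \<in> {0..pi} \<Longrightarrow> \<bar>f x - f y\<bar> \<le> \<bar>x - y\<bar>"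
    and xy: "x \<le> y" "y \<le> x + pi"
  shows "\<bar>f x - f y\<bar> \<le> y - x"
proof -
  have shift: "f (x + of_int n * pi) = (if even n then f x else pi - f x)" for x n
    using antipodal_add_int_mult_pi[of f, OF ant] .
  obtain n x' where x: "x = x' + of_int n * pi" "0 \<le> x'" "x' < pi"
    using decompose_mod_pi .
  define y' where "y' = y - of_int n * pi"
  have y: "y = y' + of_int n * pi" "x' \<le> y'" "y' \<le> x' + pi"
    using xy x unfolding y'_def by auto
  show ?thesis
  proof (cases "y' \<le> pi")
    case True
    have "\<bar>f x - f y\<bar> = \<bar>f x' - f y'\<bar>"
      using x(1) y(1) shift[of x' n] shift[of y' n] by (cases "even n") simp_all
    also have "\<dots> \<le> y' - x'" using lip[of x' y'] x y True by simp
    finally show ?thesis using x(1) y(1) by simp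
  next
    case False
    define y'' where "y'' = y' - pi"
    have y'': "y = y'' + of_int (n + 1) * pi" "0 < y''" "y'' \<le> x'"
      using False y unfolding y''_def by (auto simp: algebra_simps)
    have "\<bar>f x' - f pi\<bar> \<le> pi - x'" "\<bar>f y'' - f 0\<bar> \<le> y''"
      "\<bar>f x' - f 0\<bar> \<le> x'" "\<bar>f y'' - f pi\<bar> \<le> pi - y''"
      using lip[of x' pi] lip[of y'' 0] lip[of x' 0] lip[of y'' pi] x y'' by auto
    moreover have "f 0 + f pi = pi" using ant[of 0] by simp
    ultimately have "\<bar>f x' + f y'' - pi\<bar> \<le> pi - x' + y''" by linarith
    moreover have "pi - x' + y'' = y - x" using x y'' by (simp add: algebra_simps)
    moreover have "f x - f y = f x' + f y'' - pi \<or> f x - f y = - (f x' + f y'' - pi)"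
      using x(1) y''(1) shift[of x' n] shift[of y'' "n + 1"] by (cases "even n") simp_all
    ultimately show ?thesis by (metis abs_minus_cancel)
  qed
qed

lemma antipodal_nonexpansive_of_interval:
  assumes ant: "\<And>x. f x + f (x + pi) = pi"
    and lip: "\<And>x y. x \<in> {0..pi} \<Longrightarrow> y \<in> {0..pi} \<Longrightarrow> \<bar>f x - f y\<bar> \<le> \<bar>x - y\<bar>"
  shows "antipodal_nonexpansive f"
proof -
  have "\<bar>f x - f y\<bar> \<le> circ_dist x y" for x y
  proof -
    obtain k where k: "circ_dist x y = \<bar>x - y - 2*pi * of_int k\<bar>" "circ_dist x y \<le> pi"
      using circ_dist_attained by blast
    define y' where "y' = y + of_int (2*k) * pi"
    have "f y' = f y"
      using antipodal_add_int_mult_pi[of f, OF ant, of y "2*k"] unfolding y'_def by simp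
    moreover have dist: "circ_dist x y = \<bar>x - y'\<bar>"
      using k(1) unfolding y'_def by (simp add: algebra_simps)
    moreover have "\<bar>f x - f y'\<bar> \<le> \<bar>x - y'\<bar>"
      using antipodal_abs_diff_le_within_pi[OF ant lip, of x y']
        antipodal_abs_diff_le_within_pi[OF ant lip, of y' x] k(2) dist
      by (cases "x \<le> y'") (simp_all add: abs_minus_commute)
    ultimately show ?thesis by simp
  qed
  then show ?thesis unfolding antipodal_nonexpansive_def using ant by blast
qed

lemma antipodal_close_on_interval_imp_close:
  assumes "\<And>x. f x + f (x + pi) = pi" "\<And>x. g x + g (x + pi) = pi"
    and "\<And>x. x \<in> {0..<pi} \<Longrightarrow> \<bar>f x - g x\<bar> \<le> e"
  shows "\<bar>f x - g x\<bar> \<le> e"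
proof -
  obtain n x' where x: "x = x' + of_int n * pi" "0 \<le> x'" "x' < pi"
    using decompose_mod_pi .
  then show ?thesis
    using assms(3)[of x'] antipodal_add_int_mult_pi[of f, OF assms(1), of x' n]
      antipodal_add_int_mult_pi[of g, OF assms(2), of x' n]
    by (cases "even n") (simp_all add: abs_minus_commute)
qed

section \<open>Lebesgue measure of initial segments\<close>

lemma sets_lebesgue_Int_atLeastAtMost:
  fixes A :: "real set"
  shows "A \<in> sets lebesgue \<Longrightarrow> A \<inter> {a..b} \<in> sets lebesgue"
  by (erule sets.Int) simp

lemma lmeasurable_Int_atLeastAtMost:
  fixes A :: "real set"
  shows "A \<in> sets lebesgue \<Longrightarrow> A \<inter> {a..b} \<in> lmeasurable"
  by (rule fmeasurableI2[OF _ Int_lower2 sets_lebesgue_Int_atLeastAtMost]) simp_all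

lemma lmeasurable_greaterThanAtMost: "{a<..b::real} \<in> lmeasurable"
  by (rule fmeasurableI2[of "{a..b}"]) (simp_all add: subset_iff)

lemma measure_Int_atLeastAtMost_mono:
  fixes A :: "real set"
  assumes "A \<in> sets lebesgue" "0 \<le> p" "p \<le> q"
  shows "measure lebesgue (A \<inter> {0..p}) \<le> measure lebesgue (A \<inter> {0..q})"
proof (rule measure_mono_fmeasurable)
  show "A \<inter> {0..p} \<subseteq> A \<inter> {0..q}" using assms by auto
  show "A \<inter> {0..p} \<in> sets lebesgue" using sets_lebesgue_Int_atLeastAtMost[OF assms(1)] .
  show "A \<inter> {0..q} \<in> lmeasurable" using lmeasurable_Int_atLeastAtMost[OF assms(1)] .
qed

lemma measure_Int_atLeastAtMost_diff_le:
  fixes A :: "real set"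
  assumes "A \<in> sets lebesgue" "0 \<le> p" "p \<le> q"
  shows "measure lebesgue (A \<inter> {0..q}) - measure lebesgue (A \<inter> {0..p}) \<le> q - p"
proof -
  have "measure lebesgue (A \<inter> {0..q}) - measure lebesgue (A \<inter> {0..p})
      = measure lebesgue (A \<inter> {0..q} - A \<inter> {0..p})"
  proof (rule measurable_measure_Diff[symmetric])
    show "A \<inter> {0..q} \<in> lmeasurable" using lmeasurable_Int_atLeastAtMost[OF assms(1)] .
    show "A \<inter> {0..p} \<in> sets lebesgue" using sets_lebesgue_Int_atLeastAtMost[OF assms(1)] .
    show "A \<inter> {0..p} \<subseteq> A \<inter> {0..q}" using assms by auto
  qed
  also have "\<dots> \<le> measure lebesgue {p..q}"
  proof (rule measure_mono_fmeasurable)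
    show "A \<inter> {0..q} - A \<inter> {0..p} \<subseteq> {p..q}" using assms by auto
    show "A \<inter> {0..q} - A \<inter> {0..p} \<in> sets lebesgue"
      using sets_lebesgue_Int_atLeastAtMost[OF assms(1)] by (intro sets.Diff)
  qed simp
  finally show ?thesis using assms by simp
qed

lemma grid_cell_exists:
  fixes N :: nat and b p :: real
  assumes "N > 0" "p \<in> {0..b}"
  shows "\<exists>j<N. real j * (b / N) \<le> p \<and> p \<le> real (Suc j) * (b / N)"
proof (cases "b = 0")
  case True
  then show ?thesis using assms by auto
next
  case False
  define h where "h = b / N"
  have h: "h > 0" unfolding h_def using assms False by auto
  define j where "j = min (nat \<lfloor>p / h\<rfloor>) (N - 1)"
  have floor_nonneg: "0 \<le> \<lfloor>p / h\<rfloor>" using assms h by simp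
  have "real j \<le> real (nat \<lfloor>p / h\<rfloor>)" unfolding j_def by simp
  also have "\<dots> \<le> p / h" using floor_nonneg by simp
  finally have "real j \<le> p / h" .
  then have "real j * h \<le> p" using h by (simp add: pos_le_divide_eq)
  moreover have "p \<le> real (Suc j) * h"
  proof (cases "nat \<lfloor>p / h\<rfloor> \<le> N - 1")
    case True
    have "p / h < real (nat \<lfloor>p / h\<rfloor>) + 1" using assms h by linarith
    then show ?thesis using True h unfolding j_def by (simp add: pos_divide_less_eq algebra_simps)
  next
    case False
    then have "real (Suc j) * h = b" unfolding j_def h_def using assms by simp
    then show ?thesis using assms by simp
  qed
  moreover have "j < N" unfolding j_def using assms by simp
  ultimately show ?thesis unfolding h_def by blast
qed

lemma measure_Int_prefix_Union_grid_intervals: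
  fixes d :: "nat \<Rightarrow> real"
  assumes "0 \<le> h" "\<And>k. k < N \<Longrightarrow> 0 \<le> d k \<and> d k \<le> h" "j \<le> N"
  shows "measure lebesgue ((\<Union>k<N. {real k * h <.. real k * h + d k}) \<inter> {0..real j * h})
    = (\<Sum>k<j. d k)"
proof -
  define I where "I k = {real k * h <.. real k * h + d k}" for k
  have I_cell: "I k \<subseteq> {real k * h <.. real (Suc k) * h}" if "k < N" for k
    unfolding I_def using assms(2)[OF that] by (auto simp: algebra_simps)
  have "(\<Union>k<N. I k) \<inter> {0..real j * h} = (\<Union>k<j. I k)"
  proof (intro equalityI subsetI)
    fix t assume "t \<in> (\<Union>k<N. I k) \<inter> {0..real j * h}"
    then obtain k where k: "k < N" "t \<in> I k" "t \<le> real j * h" by auto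
    then have "real k * h < real j * h" using I_cell[of k] by auto
    then have "k < j" using assms(1) by (metis mult_right_mono not_less of_nat_le_iff)
    then show "t \<in> (\<Union>k<j. I k)" using k by auto
  next
    fix t assume "t \<in> (\<Union>k<j. I k)"
    then obtain k where k: "k < j" "t \<in> I k" by auto
    then have "real (Suc k) * h \<le> real j * h" using assms(1) by (intro mult_right_mono) auto
    moreover have "0 \<le> real k * h" using assms(1) by simp
    ultimately show "t \<in> (\<Union>k<N. I k) \<inter> {0..real j * h}"
      using k I_cell[of k] assms(3) by fastforce
  qed
  moreover have "measure lebesgue (\<Union>k<j. I k) = (\<Sum>k<j. measure lebesgue (I k))"
  proof (rule measure_UNION')
    show "pairwise (\<lambda>k l. disjnt (I k) (I l)) {..<j}"
    proof (rule pairwiseI)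
      have "disjnt (I k) (I l)" if "k < l" "l < j" for k l
      proof -
        have "real (Suc k) * h \<le> real l * h" using that assms(1) by (intro mult_right_mono) auto
        then show ?thesis using I_cell[of k] I_cell[of l] that assms(3) by (force simp: disjnt_def)
      qed
      then show "disjnt (I k) (I l)" if "k \<in> {..<j}" "l \<in> {..<j}" "k \<noteq> l" for k l
        using that by (metis disjnt_sym lessThan_iff nat_neq_iff)
    qed
  qed (simp_all add: I_def lmeasurable_greaterThanAtMost)
  moreover have "measure lebesgue (I k) = d k" if "k < j" for k
    unfolding I_def using assms(2)[of k] assms(3) that by simp
  ultimately show ?thesis unfolding I_def by simp
qed

lemma exists_set_prefix_measure_on_grid:
  fixes u :: "real \<Rightarrow> real" and h :: real and N :: nat
  assumes "0 \<le> h"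
    and u: "\<And>k. k < N \<Longrightarrow> u (real k * h) \<le> u (real (Suc k) * h)
      \<and> u (real (Suc k) * h) - u (real k * h) \<le> h"
  obtains A where "A \<subseteq> {0..real N * h}" "A \<in> sets lebesgue"
    "\<And>j. j \<le> N \<Longrightarrow> measure lebesgue (A \<inter> {0..real j * h}) = u (real j * h) - u 0"
proof -
  define d where "d k = u (real (Suc k) * h) - u (real k * h)" for k
  have d: "0 \<le> d k \<and> d k \<le> h" if "k < N" for k
    using u[OF that] unfolding d_def by simp
  define A where "A = (\<Union>k<N. {real k * h <.. real k * h + d k})"
  have "A \<subseteq> {0..real N * h}"
  proof
    fix t assume "t \<in> A"
    then obtain k where k: "k < N" "t \<in> {real k * h <.. real k * h + d k}" unfolding A_def by auto
    have "real k * h + d k \<le> real (Suc k) * h" using d[OF k(1)] by (simp add: algebra_simps)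
    also have "\<dots> \<le> real N * h" using k(1) assms(1) by (intro mult_right_mono) auto
    finally have "real k * h + d k \<le> real N * h" .
    moreover have "0 \<le> real k * h" using assms(1) by simp
    ultimately show "t \<in> {0..real N * h}" using k(2) by auto
  qed
  moreover have "A \<in> sets lebesgue" unfolding A_def by auto
  moreover have "measure lebesgue (A \<inter> {0..real j * h}) = u (real j * h) - u 0" if "j \<le> N" for j
  proof -
    have "measure lebesgue (A \<inter> {0..real j * h}) = (\<Sum>k<j. d k)"
      unfolding A_def using measure_Int_prefix_Union_grid_intervals[OF assms(1) d that] .
    also have "\<dots> = u (real j * h) - u 0"
      unfolding d_def using sum_lessThan_telescope[of "\<lambda>k. u (real k * h)" j] by simp
    finally show ?thesis .
  qed
  ultimately show ?thesis using that by blast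
qed

lemma exists_set_prefix_measure_approx:
  fixes u :: "real \<Rightarrow> real" and b \<delta> :: real
  assumes "0 \<le> b" "0 < \<delta>" "u 0 = 0"
    and u: "\<And>p q. 0 \<le> p \<Longrightarrow> p \<le> q \<Longrightarrow> q \<le> b \<Longrightarrow> u p \<le> u q \<and> u q - u p \<le> q - p"
  obtains A where "A \<subseteq> {0..b}" "A \<in> sets lebesgue" "measure lebesgue A = u b"
    "\<And>p. p \<in> {0..b} \<Longrightarrow> \<bar>measure lebesgue (A \<inter> {0..p}) - u p\<bar> \<le> \<delta>"
proof -
  obtain N :: nat where N: "b / \<delta> < N" using reals_Archimedean2 by blast
  have N_pos: "N > 0" using N assms(1,2) by (metis divide_nonneg_pos not_gr0 not_le of_nat_0)
  define h where "h = b / N"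
  have h: "0 \<le> h" "h \<le> \<delta>" "real N * h = b"
    using N N_pos assms(1,2) unfolding h_def by (auto simp: field_simps)
  have grid_le: "real k * h \<le> real l * h" if "k \<le> l" for k l
    using that h(1) by (simp add: mult_right_mono)
  have grid_range: "0 \<le> real k * h \<and> real k * h \<le> b" if "k \<le> N" for k
    using grid_le[OF that] h by simp
  have "u (real k * h) \<le> u (real (Suc k) * h) \<and> u (real (Suc k) * h) - u (real k * h) \<le> h"
    if "k < N" for k
    using u[of "real k * h" "real (Suc k) * h"] grid_range[of k] grid_range[of "Suc k"] that h(1)
    by (simp add: algebra_simps)
  then obtain A where A: "A \<subseteq> {0..b}" "A \<in> sets lebesgue"
    and on_grid: "\<And>j. j \<le> N \<Longrightarrow> measure lebesgue (A \<inter> {0..real j * h}) = u (real j * h)"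
    using exists_set_prefix_measure_on_grid[OF h(1), of N u] h(3) assms(3) by auto
  have "measure lebesgue A = u b" using on_grid[of N] h(3) A(1) by (simp add: Int_absorb2)
  moreover have "\<bar>measure lebesgue (A \<inter> {0..p}) - u p\<bar> \<le> \<delta>" if p: "p \<in> {0..b}" for p
  proof -
    obtain j where j: "j < N" "real j * h \<le> p" "p \<le> real (Suc j) * h"
      using grid_cell_exists[OF N_pos p] unfolding h_def by blast
    have "0 \<le> real j * h" "real (Suc j) * h \<le> b" "0 \<le> p" "p \<le> b"
      using grid_range[of j] grid_range[of "Suc j"] j(1) p by auto
    then have "u (real j * h) \<le> u p" "u p \<le> u (real (Suc j) * h)"
      "u (real (Suc j) * h) - u (real j * h) \<le> h"
      "measure lebesgue (A \<inter> {0..real j * h}) \<le> measure lebesgue (A \<inter> {0..p})"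
      "measure lebesgue (A \<inter> {0..p}) \<le> measure lebesgue (A \<inter> {0..real (Suc j) * h})"
      using u[of "real j * h" p] u[of p "real (Suc j) * h"] u[of "real j * h" "real (Suc j) * h"] j
        measure_Int_atLeastAtMost_mono[OF A(2), of "real j * h" p]
        measure_Int_atLeastAtMost_mono[OF A(2), of p "real (Suc j) * h"]
      by (auto simp: algebra_simps)
    then show ?thesis using on_grid[of j] on_grid[of "Suc j"] j(1) h(2) by (simp add: abs_le_iff)
  qed
  ultimately show ?thesis using that A by blast
qed

section \<open>The functions h_A\<close>

lemma circ_red_add_pi_less_pi: "circ_red (z + pi) < pi \<longleftrightarrow> \<not> circ_red z < pi"
proof -
  define n where "n = \<lfloor>z / (2*pi)\<rfloor>"
  define r where "r = circ_red z"
  have z: "z = r + 2*pi * of_int n" unfolding r_def n_def circ_red_def by simp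
  have r: "0 \<le> r" "r < 2*pi" unfolding r_def using circ_red_bounds by auto
  show ?thesis
  proof (cases "r < pi")
    case True
    have "circ_red (z + pi) = circ_red (r + pi)"
      unfolding z using circ_red_add_int_mult[of "r + pi" n] by (simp add: algebra_simps)
    also have "\<dots> = r + pi" using r True by (intro circ_red_id) auto
    finally show ?thesis using True r unfolding r_def by simp
  next
    case False
    have "circ_red (z + pi) = circ_red (r - pi)"
      unfolding z using circ_red_add_int_mult[of "r - pi" "n + 1"] by (simp add: algebra_simps)
    also have "\<dots> = r - pi" using r False by (intro circ_red_id) auto
    finally show ?thesis using False r unfolding r_def by simp
  qed
qed

lemma g_theta_add_pi: "g_theta t (p + pi) = - g_theta t p"
  using circ_red_add_pi_less_pi[of "p - t"] unfolding g_theta_def by (simp add: algebra_simps)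

lemma h_set_antipodal: "h_set A p + h_set A (p + pi) = pi"
  unfolding h_set_def set_lebesgue_integral_def g_theta_add_pi by simp

lemma g_theta_on_interval:
  assumes "t \<in> {0..pi}" "p \<in> {0..<pi}"
  shows "g_theta t p = (if t \<le> p then 1/2 else -1/2)"
proof (cases "t \<le> p")
  case True
  then have "circ_red (p - t) = p - t" using assms by (intro circ_red_id) auto
  then show ?thesis using True assms unfolding g_theta_def by simp
next
  case False
  have "circ_red (p - t) = circ_red ((p - t + 2*pi) + 2*pi * of_int (-1))" by simp
  also have "\<dots> = p - t + 2*pi"
    unfolding circ_red_add_int_mult using False assms by (intro circ_red_id) auto
  finally show ?thesis using False assms unfolding g_theta_def by simp
qed

lemma h_set_integrand_eq:
  assumes "A \<subseteq> {0..pi}" "p \<in> {0..<pi}"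
  shows "indicator {0..pi} t *\<^sub>R (g_theta t p * (indicator A t - indicator ({0..pi} - A) t))
    = 2 * indicator (A \<inter> {0..p}) t - indicator A t - indicator {0..p} t
      + 1/2 * indicator {0..pi} t"
proof (cases "t \<in> {0..pi}")
  case True
  have g: "g_theta t p = (if t \<le> p then 1/2 else -1/2)"
    using g_theta_on_interval[OF True assms(2)] .
  have "t \<in> {0..p} \<longleftrightarrow> t \<le> p" "t \<in> A \<inter> {0..p} \<longleftrightarrow> t \<in> A \<and> t \<le> p" using True by auto
  then show ?thesis
    using True unfolding g indicator_def by (cases "t \<in> A"; cases "t \<le> p") simp_all
next
  case False
  then have "t \<notin> A" "t \<notin> {0..p}" using assms by auto
  then show ?thesis using False by (auto simp: indicator_def)
qed

lemma h_set_eq_measure: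
  assumes A: "A \<subseteq> {0..pi}" "A \<in> sets lebesgue" and p: "p \<in> {0..pi}"
  shows "h_set A p = pi - p + 2 * measure lebesgue (A \<inter> {0..p}) - measure lebesgue A"
proof -
  have A_fin: "A \<in> lmeasurable"
    using lmeasurable_Int_atLeastAtMost[OF A(2), of 0 pi] A(1) by (simp add: Int_absorb2)
  have below_pi: "h_set A q = pi - q + 2 * measure lebesgue (A \<inter> {0..q}) - measure lebesgue A"
    if q: "q \<in> {0..<pi}" for q
  proof -
    have Aq_fin: "A \<inter> {0..q} \<in> lmeasurable"
      using lmeasurable_Int_atLeastAtMost[OF A(2)] .
    have "has_bochner_integral lebesgue
        (\<lambda>t. 2 * indicator (A \<inter> {0..q}) t - indicator A t - indicator {0..q} t
          + 1/2 * indicator {0..pi} t :: real)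
        (2 * measure lebesgue (A \<inter> {0..q}) - measure lebesgue A - measure lebesgue {0..q}
          + 1/2 * measure lebesgue {0..pi})"
      using A_fin Aq_fin lmeasurable_cbox[of 0 q] lmeasurable_cbox[of 0 pi]
      unfolding fmeasurable_def
      by (intro has_bochner_integral_add has_bochner_integral_diff has_bochner_integral_mult_right
          has_bochner_integral_real_indicator) (simp_all only: mem_Collect_eq cbox_interval)
    then have "(LINT t:{0..pi}|lebesgue.
          g_theta t q * (indicator A t - indicator ({0..pi} - A) t))
        = 2 * measure lebesgue (A \<inter> {0..q}) - measure lebesgue A - q + pi/2"
      unfolding set_lebesgue_integral_def h_set_integrand_eq[OF A(1) q]
      using q by (simp add: has_bochner_integral_integral_eq)
    then show ?thesis unfolding h_set_def by simp
  qed
  \<comment> \<open>at p = pi the integrand formula fails at t = 0, so use antipodality with p = 0\<close>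
  moreover have "h_set A pi = pi - pi + 2 * measure lebesgue (A \<inter> {0..pi}) - measure lebesgue A"
  proof -
    have "measure lebesgue (A \<inter> {0..0}) = 0"
      by (rule measure_eq_0_null_sets, rule null_sets_subset[of "{0}"]) (use A in auto)
    moreover have "A \<inter> {0..pi} = A" using A by auto
    ultimately show ?thesis
      using below_pi[of 0] h_set_antipodal[of A 0] by simp
  qed
  ultimately show ?thesis using p by (cases "p < pi") auto
qed

lemma h_set_antipodal_nonexpansive:
  assumes "A \<subseteq> {0..pi}" "A \<in> sets lebesgue"
  shows "antipodal_nonexpansive (h_set A)"
proof (rule antipodal_nonexpansive_of_interval[where f = "h_set A"])
  show "h_set A x + h_set A (x + pi) = pi" for x by (rule h_set_antipodal)
  have ordered: "\<bar>h_set A x - h_set A y\<bar> \<le> \<bar>x - y\<bar>" if "0 \<le> x" "x \<le> y" "y \<le> pi" for x y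
  proof -
    have "h_set A y - h_set A x
        = 2 * (measure lebesgue (A \<inter> {0..y}) - measure lebesgue (A \<inter> {0..x})) - (y - x)"
      using h_set_eq_measure[OF assms, of x] h_set_eq_measure[OF assms, of y] that by simp
    then show ?thesis
      using measure_Int_atLeastAtMost_mono[OF assms(2) that(1,2)]
        measure_Int_atLeastAtMost_diff_le[OF assms(2) that(1,2)] that
      by (simp add: abs_le_iff)
  qed
  show "\<bar>h_set A x - h_set A y\<bar> \<le> \<bar>x - y\<bar>" if "x \<in> {0..pi}" "y \<in> {0..pi}" for x y
  proof (cases "x \<le> y")
    case True
    then show ?thesis using ordered[of x y] that by simp
  next
    case False
    then show ?thesis using ordered[of y x] that by (simp add: abs_minus_commute)
  qed
qed

lemma antipodal_nonexpansive_approx_by_h_set: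
  assumes f: "antipodal_nonexpansive f" and "e > 0"
  obtains A where "A \<subseteq> {0..pi}" "A \<in> sets lebesgue" "\<And>x. \<bar>h_set A x - f x\<bar> \<le> e"
proof -
  have ant: "\<And>x. f x + f (x + pi) = pi" and lip: "\<And>x y. \<bar>f x - f y\<bar> \<le> circ_dist x y"
    using f unfolding antipodal_nonexpansive_def by auto
  define u where "u p = (f p + p - f 0) / 2" for p
  have "u p \<le> u q \<and> u q - u p \<le> q - p" if "0 \<le> p" "p \<le> q" for p q
  proof -
    have "\<bar>f q - f p\<bar> \<le> q - p" using lip[of q p] circ_dist_le_abs[of q p] that by simp
    moreover have "2 * (u q - u p) = (f q - f p) + (q - p)"
      unfolding u_def by (simp add: field_simps)
    ultimately show ?thesis by (simp add: abs_le_iff)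
  qed
  then obtain A where A: "A \<subseteq> {0..pi}" "A \<in> sets lebesgue" "measure lebesgue A = u pi"
    and approx: "\<And>p. p \<in> {0..pi} \<Longrightarrow> \<bar>measure lebesgue (A \<inter> {0..p}) - u p\<bar> \<le> e / 2"
    using exists_set_prefix_measure_approx[of pi "e / 2" u] \<open>e > 0\<close> unfolding u_def by auto
  have "measure lebesgue A = pi - f 0" using A(3) ant[of 0] unfolding u_def by simp
  then have diff: "h_set A p - f p = 2 * (measure lebesgue (A \<inter> {0..p}) - u p)"
    if "p \<in> {0..pi}" for p
    using h_set_eq_measure[OF A(1,2) that] unfolding u_def by (simp add: field_simps)
  have "\<bar>h_set A p - f p\<bar> \<le> e" if "p \<in> {0..<pi}" for p
  proof -
    have "p \<in> {0..pi}" using that by simp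
    then have "\<bar>h_set A p - f p\<bar> = \<bar>2 * (measure lebesgue (A \<inter> {0..p}) - u p)\<bar>"
      by (simp only: diff)
    also have "\<dots> = 2 * \<bar>measure lebesgue (A \<inter> {0..p}) - u p\<bar>" by (simp only: abs_mult abs_numeral)
    finally show ?thesis using approx[OF \<open>p \<in> {0..pi}\<close>] by simp
  qed
  then have "\<bar>h_set A x - f x\<bar> \<le> e" for x
    by (rule antipodal_close_on_interval_imp_close[where f = "h_set A" and g = f,
          OF h_set_antipodal ant])
  then show ?thesis using that A(1,2) by blast
qed

lemma antipodal_nonexpansive_in_sup_closure_h_set:
  assumes "antipodal_nonexpansive f"
  shows "f \<in> sup_closure {h_set A | A. A \<subseteq> {0..pi} \<and> A \<in> sets lebesgue}"
  unfolding sup_closure_def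
proof (intro CollectI allI impI)
  fix e :: real assume "e > 0"
  then obtain A where "A \<subseteq> {0..pi}" "A \<in> sets lebesgue" "\<And>x. \<bar>h_set A x - f x\<bar> \<le> e"
    using antipodal_nonexpansive_approx_by_h_set[OF assms] by blast
  then show "\<exists>g \<in> {h_set A | A. A \<subseteq> {0..pi} \<and> A \<in> sets lebesgue}. \<forall>x. \<bar>g x - f x\<bar> \<le> e"
    by blast
qed

lemma subset_conv_hull_fun: "S \<subseteq> conv_hull_fun S"
proof
  fix f assume "f \<in> S"
  then show "f \<in> conv_hull_fun S"
    unfolding conv_hull_fun_def
    by (intro CollectI exI[of _ 1] exI[of _ "\<lambda>_. 1"] exI[of _ "\<lambda>_. f"]) auto
qed

lemma sup_closure_mono: "S \<subseteq> T \<Longrightarrow> sup_closure S \<subseteq> sup_closure T"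
  unfolding sup_closure_def by blast

lemma conv_hull_fun_antipodal_nonexpansive:
  assumes "S \<subseteq> {f. antipodal_nonexpansive f}"
  shows "conv_hull_fun S \<subseteq> {f. antipodal_nonexpansive f}"
  using assms antipodal_nonexpansive_convex_comb unfolding conv_hull_fun_def by blast

lemma sup_closure_antipodal_nonexpansive:
  assumes "S \<subseteq> {f. antipodal_nonexpansive f}"
  shows "sup_closure S \<subseteq> {f. antipodal_nonexpansive f}"
  using assms antipodal_nonexpansive_uniform_limit unfolding sup_closure_def by blast

theorem theorem3p21:
  shows "sup_closure (conv_hull_fun {h_set A | A. A \<subseteq> {0..pi} \<and> A \<in> sets lebesgue})
         = tight_span_S1"
proof -
  let ?H = "{h_set A | A. A \<subseteq> {0..pi} \<and> A \<in> sets lebesgue}"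
  have "?H \<subseteq> {f. antipodal_nonexpansive f}" using h_set_antipodal_nonexpansive by blast
  then have "sup_closure (conv_hull_fun ?H) \<subseteq> tight_span_S1"
    unfolding tight_span_S1_eq
    by (intro sup_closure_antipodal_nonexpansive conv_hull_fun_antipodal_nonexpansive)
  moreover have "tight_span_S1 \<subseteq> sup_closure (conv_hull_fun ?H)"
  proof -
    have "tight_span_S1 \<subseteq> sup_closure ?H"
      unfolding tight_span_S1_eq using antipodal_nonexpansive_in_sup_closure_h_set by blast
    also have "\<dots> \<subseteq> sup_closure (conv_hull_fun ?H)"
      by (intro sup_closure_mono subset_conv_hull_fun)
    finally show ?thesis .
  qed
  ultimately show ?thesis by (rule equalityI)
qed

end
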